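(* Let $S$ be a semibounded relation in $\mathfrak H$ with lower bound $\gamma\in\mathbb R$ and let $c\le\gamma$. Then: (a) $S_{{\rm K},c}=\{\{\varphi,\varphi'\}\in S^*:\varphi'-c\varphi\in\mathrm{dom}\,\bar{\mathfrak t}((S-c)^{-1})\}$; and if $H$ is a selfadjoint extension of $S$ with $\mathrm{ran}\,(H-c)\subset\mathrm{dom}\,\bar{\mathfrak t}((S-c)^{-1})$, then $H=S_{{\rm K},c}$. (b) $S_{{\rm k},c}=S\,\widehat+\,\widehat{\mathfrak N}_c(S^* )$; and if $H$ is a symmetric extension of $S$ with $\mathrm{ran}\,(H-c)\subset\mathrm{ran}\,(S-c)$, then $H\subset S_{{\rm k},c}$. (c) For every $c<\gamma$, $S_{{\rm K},c}=\overline S\,\widehat+\,\widehat{\mathfrak N}_c(S^* )$; and $S_{{\rm k},\gamma}=S_{{\rm K},\gamma}$ holds if and only if $\mathrm{ran}\,(S-\gamma)=\overline{\mathrm{ran}}\,(S-\gamma)\cap\mathrm{ran}\,(S^*-\gamma)$; in particular it holds if $\mathrm{ran}\,(S-\gamma)$ is closed.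
   Context: Linear relations in $\mathfrak H$ are linear subspaces of $\mathfrak H\times\mathfrak H$; $T^*$ adjoint relation, $T^{**}=\overline T$ the closure, $T^{-1}=\{\{g,f\}:\{f,g\}\in T\}$, $RT=\{\{f,h\}:\exists g,\{f,g\}\in T,\{g,h\}\in R\}$, $T-c=\{\{f,g-cf\}:\{f,g\}\in T\}$, $c+T=\{\{f,g+cf\}\}$, $A\,\widehat+\,B=\{\{f+h,g+k\}:\{f,g\}\in A,\{h,k\}\in B\}$, $\widehat{\mathfrak N}_c(S^* )=\{\{f,cf\}:f\in\ker(S^*-c)\}$. Symmetric: $T\subset T^*$; selfadjoint: $T=T^*$. $S$ is semibounded with lower bound $\gamma$ if $\gamma$ is the supremum of all $c$ with $(\varphi',\varphi)\ge c\|\varphi\|^2$ on $S$. For a semibounded relation $T$, $\mathfrak t(T)[\varphi,\psi]=(\varphi',\psi)$ on $\mathrm{dom}\,T$; it is closable with closure $\bar{\mathfrak t}(T)$; here $\mathrm{dom}\,\mathfrak t((S-c)^{-1})=\mathrm{ran}\,(S-c)$. A representing map for $\mathfrak t(S)-c$ is a linear operator $Q_c$ into a Hilbert space with $\mathrm{dom}\,Q_c=\mathrm{dom}\,S$ and $\mathfrak t(S)[\varphi,\psi]=c(\varphi,\psi)+(Q_c\varphi,Q_c\psi)$; its companion relation is $J_c=\{\{Q_c\varphi,\varphi'-c\varphi\}:\{\varphi,\varphi'\}\in S\}$. The Kreĭn type extension is $S_{{\rm K},c}=c+J_c^{**}J_c^*$ and the weak Kreĭn type extension is $S_{{\rm k},c}=c+J_cJ_c^*$;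 both are independent of the choice of $Q_c$ and $S\subset S_{{\rm k},c}\subset S_{{\rm K},c}$. *)

theory Defs
  imports "HOL-Analysis.Analysis"
begin

text \<open>The library has no complex inner product spaces, so we introduce the standard
class (inner product antilinear in the first argument, linear in the second).\<close>

class complex_inner = real_normed_vector +
  fixes scaleC :: "complex \<Rightarrow> 'a \<Rightarrow> 'a"
    and cinner :: "'a \<Rightarrow> 'a \<Rightarrow> complex"
  assumes scaleC_add_right: "scaleC a (x + y) = scaleC a x + scaleC a y"
    and scaleC_add_left: "scaleC (a + b) x = scaleC a x + scaleC b x"
    and scaleC_scaleC: "scaleC a (scaleC b x) = scaleC (a * b) x"
    and scaleC_one: "scaleC 1 x = x"
    and scaleR_scaleC: "scaleR r x = scaleC (complex_of_real r) x"
    and cinner_commute: "cinner x y = cnj (cinner y x)"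
    and cinner_add_left: "cinner (x + y) z = cinner x z + cinner y z"
    and cinner_scaleC_left: "cinner (scaleC a x) y = cnj a * cinner x y"
    and cinner_self_real: "Im (cinner x x) = 0"
    and cinner_self_nonneg: "0 \<le> Re (cinner x x)"
    and cinner_self_eq_zero: "cinner x x = 0 \<longleftrightarrow> x = 0"
    and norm_eq_sqrt_cinner: "norm x = sqrt (Re (cinner x x))"

class chilbert = complex_inner + complete_space

definition lin_rel :: "('a::complex_inner \<times> 'b::complex_inner) set \<Rightarrow> bool" where
  "lin_rel T \<longleftrightarrow> (0, 0) \<in> T
     \<and> (\<forall>f g h k. (f, g) \<in> T \<longrightarrow> (h, k) \<in> T \<longrightarrow> (f + h, g + k) \<in> T)
     \<and> (\<forall>a f g. (f, g) \<in> T \<longrightarrow> (scaleC a f, scaleC a g) \<in> T)"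

definition adj :: "('a::complex_inner \<times> 'b::complex_inner) set \<Rightarrow> ('b \<times> 'a) set" where
  "adj T = {(h, k). \<forall>f g. (f, g) \<in> T \<longrightarrow> cinner g h = cinner f k}"

text \<open>Inverse relation is the library's converse; the product RT is T O R.\<close>

definition rshift :: "real \<Rightarrow> ('a::complex_inner \<times> 'a) set \<Rightarrow> ('a \<times> 'a) set" where
  "rshift c T = {(f, g - scaleR c f) | f g. (f, g) \<in> T}"

definition rplus :: "real \<Rightarrow> ('a::complex_inner \<times> 'a) set \<Rightarrow> ('a \<times> 'a) set" where
  "rplus c T = {(f, g + scaleR c f) | f g. (f, g) \<in> T}"

definition rsum :: "('a::complex_inner \<times> 'b::complex_inner) set \<Rightarrow> ('a \<times> 'b) set \<Rightarrow> ('a \<times> 'b) set" where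
  "rsum A B = {(f + h, g + k) | f g h k. (f, g) \<in> A \<and> (h, k) \<in> B}"

definition eig_rel :: "real \<Rightarrow> ('a::complex_inner \<times> 'a) set \<Rightarrow> ('a \<times> 'a) set" where
  "eig_rel c T = {(f, scaleR c f) | f. (f, scaleR c f) \<in> T}"

definition lb_set :: "('a::complex_inner \<times> 'a) set \<Rightarrow> real set" where
  "lb_set T = {c. \<forall>\<phi> \<phi>'. (\<phi>, \<phi>') \<in> T \<longrightarrow>
                  Im (cinner \<phi>' \<phi>) = 0 \<and> c * (norm \<phi>)\<^sup>2 \<le> Re (cinner \<phi>' \<phi>)}"

definition semibounded_lb :: "('a::complex_inner \<times> 'a) set \<Rightarrow> real \<Rightarrow> bool" where
  "semibounded_lb T \<gamma> \<longleftrightarrow> lb_set T \<noteq> {} \<and> bdd_above (lb_set T) \<and> \<gamma> = Sup (lb_set T)"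

text \<open>Domain of the closure of the form t(T)[phi,psi] = (phi',psi) on dom T:
  limits of sequences in dom T that are Cauchy with respect to the form, i.e.
  t(T)[u n - u m] \<rightarrow> 0.\<close>
definition form_closure_dom :: "('a::complex_inner \<times> 'a) set \<Rightarrow> 'a set" where
  "form_closure_dom T = {h. \<exists>u. (\<forall>n. u n \<in> Domain T) \<and> u \<longlonglongrightarrow> h \<and>
      (\<forall>e>0. \<exists>N. \<forall>n\<ge>N. \<forall>m\<ge>N. \<forall>g. (u n - u m, g) \<in> T \<longrightarrow>
           cmod (cinner g (u n - u m)) < e)}"

text \<open>Q is a representing map for t(S) - c: linear on dom S (its values outside dom S
  are irrelevant) and t(S)[phi,psi] = c (phi,psi) + (Q phi, Q psi).\<close>
definition rep_map :: "('a::complex_inner \<times> 'a) set \<Rightarrow> real \<Rightarrow> ('a \<Rightarrow> 'b::complex_inner) \<Rightarrow> bool" where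
  "rep_map S c Q \<longleftrightarrow>
     (\<forall>\<phi>\<in>Domain S. \<forall>\<psi>\<in>Domain S. Q (\<phi> + \<psi>) = Q \<phi> + Q \<psi>)
   \<and> (\<forall>a. \<forall>\<phi>\<in>Domain S. Q (scaleC a \<phi>) = scaleC a (Q \<phi>))
   \<and> (\<forall>\<phi> \<phi>' \<psi>. (\<phi>, \<phi>') \<in> S \<longrightarrow> \<psi> \<in> Domain S \<longrightarrow>
        cinner \<phi>' \<psi> = complex_of_real c * cinner \<phi> \<psi> + cinner (Q \<phi>) (Q \<psi>))"

definition companion :: "('a::complex_inner \<times> 'a) set \<Rightarrow> real \<Rightarrow> ('a \<Rightarrow> 'b::complex_inner) \<Rightarrow> ('b \<times> 'a) set" where
  "companion S c Q = {(Q \<phi>, \<phi>' - scaleR c \<phi>) | \<phi> \<phi>'. (\<phi>, \<phi>') \<in> S}"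

text \<open>Krein type extension S_K,c = c + J_c** J_c*.\<close>
definition krein_K :: "('a::complex_inner \<times> 'a) set \<Rightarrow> real \<Rightarrow> ('a \<Rightarrow> 'b::complex_inner) \<Rightarrow> ('a \<times> 'a) set" where
  "krein_K S c Q = rplus c (adj (companion S c Q) O adj (adj (companion S c Q)))"

text \<open>Weak Krein type extension S_k,c = c + J_c J_c*.\<close>
definition krein_k :: "('a::complex_inner \<times> 'a) set \<Rightarrow> real \<Rightarrow> ('a \<Rightarrow> 'b::complex_inner) \<Rightarrow> ('a \<times> 'a) set" where
  "krein_k S c Q = rplus c (adj (companion S c Q) O companion S c Q)"

end

theory Submission
  imports Defs
begin

text \<open>
  Let J be the companion relation of a representing map Q, so that S_K,c - c = J** J*,
  S_k,c - c = J J* and J** is the closure of J. The graph of Q on dom S lies in J*, so a pair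
  belongs to S_K,c exactly when it lies in S* and its shifted second component lies in ran J**.
  An element of ran J** is a limit of \<phi>_n' - c \<phi>_n with Q \<phi>_n Cauchy, and \<parallel>Q (\<phi>_n - \<phi>_m)\<parallel>^2
  is the form of (S - c)\<inverse> at the differences; hence ran J** is the domain of the closed form,
  which is (a). Replacing J** by J gives (b), with ker J* = N_c(S*). Below the lower bound,
  \<parallel>Q \<phi>\<parallel>^2 \<ge> (\<gamma> - c) \<parallel>\<phi>\<parallel>^2 forces the \<phi>_n to converge as well, so S_K,c is the closure of S
  plus N_c(S*). For the last part, ker J* is orthogonal to the closure of ran J = ran (S - c),
  and S_k,c = S_K,c makes J J* = J** J* selfadjoint.
\<close>

section \<open>Complex inner product spaces\<close>

lemma cinner_add_right: "cinner (x::'a::complex_inner) (y + z) = cinner x y + cinner x z"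
  by (metis cinner_commute cinner_add_left complex_cnj_add)

lemma cinner_scaleC_right: "cinner (x::'a::complex_inner) (scaleC a y) = a * cinner x y"
  by (metis cinner_commute cinner_scaleC_left complex_cnj_cnj complex_cnj_mult)

lemma cinner_zero_left [simp]: "cinner (0::'a::complex_inner) x = 0"
  using cinner_add_left[of "0::'a" 0 x] by simp

lemma cinner_zero_right [simp]: "cinner (x::'a::complex_inner) 0 = 0"
  using cinner_add_right[of x 0 0] by simp

lemma scaleC_minus_one: "scaleC (-1) (x::'a::complex_inner) = - x"
  using scaleR_scaleC[of "-1" x] by simp

lemma scaleC_diff_right: "scaleC a (x - y) = scaleC a x - scaleC a (y::'a::complex_inner)"
  by (metis add_diff_cancel scaleC_add_right diff_add_cancel add_diff_eq)

lemma cinner_minus_left [simp]: "cinner (- x) (y::'a::complex_inner) = - cinner x y"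
  by (metis cinner_scaleC_left scaleC_minus_one complex_cnj_minus complex_cnj_one mult_minus1)

lemma cinner_minus_right [simp]: "cinner (x::'a::complex_inner) (- y) = - cinner x y"
  by (metis cinner_scaleC_right scaleC_minus_one mult_minus1)

lemma cinner_diff_left: "cinner (x - y) (z::'a::complex_inner) = cinner x z - cinner y z"
  by (metis cinner_add_left cinner_minus_left diff_conv_add_uminus)

lemma cinner_diff_right: "cinner (x::'a::complex_inner) (y - z) = cinner x y - cinner x z"
  by (metis cinner_add_right cinner_minus_right diff_conv_add_uminus)

lemma cinner_scaleR_left:
  "cinner (scaleR r x) (y::'a::complex_inner) = complex_of_real r * cinner x y"
  by (simp add: scaleR_scaleC cinner_scaleC_left)

lemma cinner_scaleR_right:
  "cinner (x::'a::complex_inner) (scaleR r y) = complex_of_real r * cinner x y"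
  by (simp add: scaleR_scaleC cinner_scaleC_right)

lemmas cinner_simps = cinner_add_left cinner_add_right cinner_diff_left cinner_diff_right
  cinner_scaleR_left cinner_scaleR_right

lemma cinner_self_eq_power2_norm: "cinner (x::'a::complex_inner) x = complex_of_real ((norm x)\<^sup>2)"
proof -
  have "(norm x)\<^sup>2 = Re (cinner x x)"
    using norm_eq_sqrt_cinner[of x] cinner_self_nonneg[of x] by simp
  then show ?thesis using cinner_self_real[of x] by (simp add: complex_eq_iff)
qed

lemma power2_norm_eq_Re_cinner: "(norm (x::'a::complex_inner))\<^sup>2 = Re (cinner x x)"
  using cinner_self_eq_power2_norm[of x] by simp

lemma power2_norm_diff_scaleC:
  fixes w m :: "'a::complex_inner"
  shows "(norm (w - scaleC t m))\<^sup>2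
    = (norm w)\<^sup>2 - 2 * Re (t * cinner w m) + (cmod t)\<^sup>2 * (norm m)\<^sup>2"
proof -
  have "cinner (w - scaleC t m) (w - scaleC t m)
      = cinner w w - t * cinner w m - cnj (t * cinner w m) + (cnj t * t) * cinner m m"
    by (simp add: cinner_diff_left cinner_diff_right cinner_scaleC_left cinner_scaleC_right
        cinner_commute[of m w] algebra_simps)
  also have "\<dots> = complex_of_real ((norm w)\<^sup>2) - t * cinner w m - cnj (t * cinner w m)
      + complex_of_real ((cmod t)\<^sup>2 * (norm m)\<^sup>2)"
    using complex_norm_square[of t] by (simp add: cinner_self_eq_power2_norm mult.commute)
  finally show ?thesis
    unfolding power2_norm_eq_Re_cinner[of "w - scaleC t m"] by simp
qed

lemma norm_scaleC: "norm (scaleC a (x::'a::complex_inner)) = cmod a * norm x"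
proof -
  have "scaleC (- a) x = - scaleC a x"
    using scaleC_scaleC[of "-1" a x] by (simp add: scaleC_minus_one)
  then have "(norm (scaleC a x))\<^sup>2 = (norm (0 - scaleC (- a) x))\<^sup>2"
    by simp
  also have "\<dots> = (cmod a * norm x)\<^sup>2"
    unfolding power2_norm_diff_scaleC by (simp add: power_mult_distrib)
  finally show ?thesis by (simp add: power2_eq_iff_nonneg)
qed

lemma norm_cinner_le: "cmod (cinner (x::'a::complex_inner) y) \<le> norm x * norm y"
proof (cases "y = 0")
  case False
  define N where "N = (norm y)\<^sup>2"
  define a where "a = cinner y x"
  define s where "s = a / complex_of_real N"
  have N: "N > 0" using False by (simp add: N_def)
  have "s * cinner x y = complex_of_real ((cmod a)\<^sup>2 / N)"
    by (simp add: s_def a_def cinner_commute[of x y] flip: complex_norm_square)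
  moreover have "(cmod s)\<^sup>2 * N = (cmod a)\<^sup>2 / N"
    using N by (simp add: s_def norm_divide power_divide power2_eq_square)
  ultimately have "(norm (x - scaleC s y))\<^sup>2 = (norm x)\<^sup>2 - (cmod a)\<^sup>2 / N"
    unfolding power2_norm_diff_scaleC N_def by simp
  then have "(cmod a)\<^sup>2 / N \<le> (norm x)\<^sup>2"
    by (metis diff_ge_0_iff_ge zero_le_power2)
  then have "(cmod a)\<^sup>2 \<le> (norm x * norm y)\<^sup>2"
    using N by (simp add: pos_divide_le_eq power_mult_distrib N_def)
  then have "cmod a \<le> norm x * norm y" by (rule power2_le_imp_le) simp
  then show ?thesis by (simp add: a_def cinner_commute[of x y])
qed simp

lemma bounded_bilinear_cinner: "bounded_bilinear (cinner :: 'a::complex_inner \<Rightarrow> 'a \<Rightarrow> complex)"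
  by (rule bounded_bilinear.intro)
    (auto simp: cinner_simps scaleR_conv_of_real intro!: exI[of _ 1] norm_cinner_le)

lemmas tendsto_cinner = bounded_bilinear.tendsto[OF bounded_bilinear_cinner]

lemmas continuous_on_cinner = bounded_bilinear.continuous_on[OF bounded_bilinear_cinner]

lemma bounded_linear_scaleC: "bounded_linear (scaleC a :: 'a::complex_inner \<Rightarrow> 'a)"
  by (rule bounded_linear_intro[of _ "cmod a"])
    (simp_all add: scaleC_add_right scaleR_scaleC scaleC_scaleC norm_scaleC mult.commute)

instantiation prod :: (complex_inner, complex_inner) complex_inner
begin

definition scaleC_prod_def: "scaleC a x = (scaleC a (fst x), scaleC a (snd x))"

definition cinner_prod_def: "cinner x y = cinner (fst x) (fst y) + cinner (snd x) (snd y)"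

instance
proof
  fix a b :: complex and x y z :: "'a \<times> 'b" and r :: real
  show "scaleC a (x + y) = scaleC a x + scaleC a y"
    by (simp add: scaleC_prod_def scaleC_add_right)
  show "scaleC (a + b) x = scaleC a x + scaleC b x"
    by (simp add: scaleC_prod_def scaleC_add_left)
  show "scaleC a (scaleC b x) = scaleC (a * b) x"
    by (simp add: scaleC_prod_def scaleC_scaleC)
  show "scaleC 1 x = x"
    by (simp add: scaleC_prod_def scaleC_one)
  show "scaleR r x = scaleC (complex_of_real r) x"
    by (simp add: scaleC_prod_def scaleR_prod_def scaleR_scaleC)
  show "cinner x y = cnj (cinner y x)"
    by (simp add: cinner_prod_def cinner_commute[of "fst x"] cinner_commute[of "snd x"])
  show "cinner (x + y) z = cinner x z + cinner y z"
    by (simp add: cinner_prod_def cinner_add_left)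
  show "cinner (scaleC a x) y = cnj a * cinner x y"
    by (simp add: cinner_prod_def scaleC_prod_def cinner_scaleC_left algebra_simps)
  have self: "cinner x x = complex_of_real ((norm (fst x))\<^sup>2 + (norm (snd x))\<^sup>2)"
    by (simp add: cinner_prod_def cinner_self_eq_power2_norm)
  then show "Im (cinner x x) = 0" "0 \<le> Re (cinner x x)" "norm x = sqrt (Re (cinner x x))"
    by (simp_all add: norm_prod_def)
  show "cinner x x = 0 \<longleftrightarrow> x = 0"
    unfolding self of_real_eq_0_iff by (simp add: add_nonneg_eq_0_iff prod_eq_iff)
qed

end

instance prod :: (chilbert, chilbert) chilbert ..

lemma cinner_Pair: "cinner (a, b) (c, d) = cinner a c + cinner b d"
  by (simp add: cinner_prod_def)

lemma scaleC_Pair: "scaleC s (a, b) = (scaleC s a, scaleC s b)"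
  by (simp add: scaleC_prod_def)

lemma Cauchy_iff_power2_norm:
  fixes f :: "nat \<Rightarrow> 'a::real_normed_vector"
  shows "Cauchy f \<longleftrightarrow> (\<forall>e>0. \<exists>N. \<forall>m\<ge>N. \<forall>n\<ge>N. (norm (f m - f n))\<^sup>2 < e)"
proof
  assume "Cauchy f"
  show "\<forall>e>0. \<exists>N. \<forall>m\<ge>N. \<forall>n\<ge>N. (norm (f m - f n))\<^sup>2 < e"
  proof (intro allI impI)
    fix e :: real assume "e > 0"
    then obtain N where N: "\<forall>m\<ge>N. \<forall>n\<ge>N. norm (f m - f n) < sqrt e"
      using \<open>Cauchy f\<close> unfolding Cauchy_iff by (meson real_sqrt_gt_zero)
    have "(norm (f m - f n))\<^sup>2 < e" if "m \<ge> N" "n \<ge> N" for m n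
      using power_strict_mono[OF N[rule_format, OF that], of 2] \<open>e > 0\<close> by simp
    then show "\<exists>N. \<forall>m\<ge>N. \<forall>n\<ge>N. (norm (f m - f n))\<^sup>2 < e" by blast
  qed
next
  assume sq: "\<forall>e>0. \<exists>N. \<forall>m\<ge>N. \<forall>n\<ge>N. (norm (f m - f n))\<^sup>2 < e"
  show "Cauchy f" unfolding Cauchy_iff
  proof (intro allI impI)
    fix e :: real assume "e > 0"
    then obtain N where "\<forall>m\<ge>N. \<forall>n\<ge>N. (norm (f m - f n))\<^sup>2 < e\<^sup>2"
      using sq by (meson zero_less_power)
    then show "\<exists>N. \<forall>m\<ge>N. \<forall>n\<ge>N. norm (f m - f n) < e"
      using \<open>e > 0\<close> power_less_imp_less_base by (meson less_le)
  qed
qed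

section \<open>Orthogonal projection onto closed subspaces\<close>

definition csubspace :: "'a::complex_inner set \<Rightarrow> bool" where
  "csubspace M \<longleftrightarrow> 0 \<in> M \<and> (\<forall>x\<in>M. \<forall>y\<in>M. x + y \<in> M) \<and> (\<forall>a. \<forall>x\<in>M. scaleC a x \<in> M)"

lemma lin_rel_iff_csubspace: "lin_rel T \<longleftrightarrow> csubspace T"
  unfolding lin_rel_def csubspace_def zero_prod_def
  by (auto simp: scaleC_Pair) (metis add_Pair, metis scaleC_Pair)

lemma csubspace_closure:
  assumes "csubspace M"
  shows "csubspace (closure M)"
proof -
  have "x + y \<in> closure M" if xy: "x \<in> closure M" "y \<in> closure M" for x y
  proof -
    obtain u where "\<forall>n. u n \<in> M" "u \<longlonglongrightarrow> x"
      using xy(1) unfolding closure_sequential by blast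
    moreover obtain v where "\<forall>n. v n \<in> M" "v \<longlonglongrightarrow> y"
      using xy(2) unfolding closure_sequential by blast
    ultimately show ?thesis using assms unfolding closure_sequential csubspace_def
      by (intro exI[of _ "\<lambda>n. u n + v n"]) (auto intro: tendsto_add)
  qed
  moreover have "scaleC a x \<in> closure M" if x: "x \<in> closure M" for x a
  proof -
    obtain u where "\<forall>n. u n \<in> M" "u \<longlonglongrightarrow> x"
      using x unfolding closure_sequential by blast
    with assms show ?thesis unfolding closure_sequential csubspace_def
      by (intro exI[of _ "\<lambda>n. scaleC a (u n)"])
        (auto intro: bounded_linear.tendsto[OF bounded_linear_scaleC])
  qed
  ultimately show ?thesis
    using assms closure_subset unfolding csubspace_def by blast
qed

lemma parallelogram_law:
  "(norm (x - y))\<^sup>2 + (norm (x + y))\<^sup>2 = 2 * (norm (x::'a::complex_inner))\<^sup>2 + 2 * (norm y)\<^sup>2"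
  by (simp add: power2_norm_eq_Re_cinner cinner_simps)

lemma almost_nearest_points_close:
  fixes M :: "'a::complex_inner set"
  assumes M: "csubspace M" "x \<in> M" "y \<in> M"
    and d: "0 \<le> d" "\<And>m. m \<in> M \<Longrightarrow> d \<le> norm (v - m)"
  shows "(norm (x - y))\<^sup>2 + 4 * d\<^sup>2 \<le> 2 * (norm (v - x))\<^sup>2 + 2 * (norm (v - y))\<^sup>2"
proof -
  define mid where "mid = scaleC (1/2) (x + y)"
  have "mid \<in> M" using M by (simp add: csubspace_def mid_def)
  then have "4 * d\<^sup>2 \<le> 4 * (norm (v - mid))\<^sup>2" using d by (simp add: power_mono)
  moreover have "\<dots> = (norm ((v - x) + (v - y)))\<^sup>2"
  proof -
    have "mid + mid = x + y"
      by (simp add: mid_def scaleR_2[symmetric] scaleR_scaleC scaleC_scaleC scaleC_one)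
    then have "(v - x) + (v - y) = 2 *\<^sub>R (v - mid)" by (simp add: scaleR_2 algebra_simps)
    then show ?thesis by (simp add: power_mult_distrib)
  qed
  moreover have "(norm ((v - x) - (v - y)))\<^sup>2 = (norm (x - y))\<^sup>2"
    by (simp add: norm_minus_commute)
  ultimately show ?thesis
    using parallelogram_law[of "v - x" "v - y"] by linarith
qed

lemma minimizing_sequence_Cauchy:
  fixes M :: "'a::complex_inner set"
  assumes M: "csubspace M"
    and f: "\<And>n. f n \<in> M" "\<And>n. (norm (v - f n))\<^sup>2 < d\<^sup>2 + 1 / (real n + 1)"
    and d: "0 \<le> d" "\<And>m. m \<in> M \<Longrightarrow> d \<le> norm (v - m)"
  shows "Cauchy f"
  unfolding Cauchy_iff_power2_norm
proof (intro allI impI)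
  fix e :: real assume "0 < e"
  obtain N :: nat where "4 / e < real N" using reals_Archimedean2 by blast
  then have N: "4 < e * (real N + 1)"
    using \<open>0 < e\<close> by (simp add: divide_less_eq distrib_left mult.commute)
  define r where "r = 1 / (real N + 1)"
  have r: "4 * r < e" using N by (simp add: r_def divide_less_eq mult.commute)
  have "(norm (f m - f n))\<^sup>2 < e" if "m \<ge> N" "n \<ge> N" for m n
  proof -
    have "1 / (real m + 1) \<le> r" "1 / (real n + 1) \<le> r"
      using that by (auto simp: r_def intro!: divide_left_mono)
    moreover have "(norm (f m - f n))\<^sup>2 + 4 * d\<^sup>2
        \<le> 2 * (norm (v - f m))\<^sup>2 + 2 * (norm (v - f n))\<^sup>2"
      by (rule almost_nearest_points_close[OF M f(1) f(1) d])
    ultimately show ?thesis using f(2)[of m] f(2)[of n] r by linarith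
  qed
  then show "\<exists>N. \<forall>m\<ge>N. \<forall>n\<ge>N. (norm (f m - f n))\<^sup>2 < e" by blast
qed

lemma closed_csubspace_nearest_point:
  fixes M :: "'a::chilbert set"
  assumes M: "csubspace M" "closed M"
  shows "\<exists>p\<in>M. \<forall>m\<in>M. norm (v - p) \<le> norm (v - m)"
proof -
  define d where "d = Inf ((\<lambda>m. norm (v - m)) ` M)"
  have ne: "(\<lambda>m. norm (v - m)) ` M \<noteq> {}" using M by (auto simp: csubspace_def)
  have bdd: "bdd_below ((\<lambda>m. norm (v - m)) ` M)" by (rule bdd_belowI[of _ 0]) auto
  have d_le: "d \<le> norm (v - m)" if "m \<in> M" for m
    unfolding d_def using bdd that by (auto intro: cInf_lower)
  have d0: "0 \<le> d" unfolding d_def using ne by (auto intro: cInf_greatest)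
  have "\<exists>m\<in>M. (norm (v - m))\<^sup>2 < d\<^sup>2 + 1 / (real n + 1)" for n
  proof -
    have "d < sqrt (d\<^sup>2 + 1 / (real n + 1))" by (intro real_less_rsqrt) simp
    then obtain m where "m \<in> M" "norm (v - m) < sqrt (d\<^sup>2 + 1 / (real n + 1))"
      unfolding d_def using cInf_less_iff[OF ne bdd] by auto
    then show ?thesis
      using power_strict_mono[of "norm (v - m)" "sqrt (d\<^sup>2 + 1 / (real n + 1))" 2] by auto
  qed
  then obtain f where f: "\<And>n. f n \<in> M" "\<And>n. (norm (v - f n))\<^sup>2 < d\<^sup>2 + 1 / (real n + 1)"
    by (metis (no_types))
  then have "Cauchy f" using minimizing_sequence_Cauchy[OF M(1) _ _ d0 d_le] by blast
  then obtain p where fp: "f \<longlonglongrightarrow> p" using Cauchy_convergent_iff convergent_def by blast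
  have "p \<in> M" using M(2) f(1) fp closed_sequentially by blast
  have lim: "(\<lambda>n. (norm (v - f n))\<^sup>2) \<longlonglongrightarrow> (norm (v - p))\<^sup>2"
    by (intro tendsto_intros fp)
  have "(\<lambda>n. 1 / (real n + 1)) \<longlonglongrightarrow> 0"
    using LIMSEQ_inverse_real_of_nat by (simp add: inverse_eq_divide add.commute)
  then have bound_lim: "(\<lambda>n. d\<^sup>2 + 1 / (real n + 1)) \<longlonglongrightarrow> d\<^sup>2 + 0"
    by (intro tendsto_intros)
  have "\<forall>n. (norm (v - f n))\<^sup>2 \<le> d\<^sup>2 + 1 / (real n + 1)"
    using f(2) less_imp_le by blast
  then have "(norm (v - p))\<^sup>2 \<le> d\<^sup>2 + 0"
    using LIMSEQ_le[OF lim bound_lim] by blast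
  then have "norm (v - p) \<le> d" using d0 power2_le_imp_le by simp
  then show ?thesis using \<open>p \<in> M\<close> d_le order_trans by blast
qed

lemma nearest_point_orthogonal:
  fixes M :: "'a::complex_inner set"
  assumes M: "csubspace M" "p \<in> M" "m \<in> M" and nearest: "\<forall>m\<in>M. norm (v - p) \<le> norm (v - m)"
  shows "cinner m (v - p) = 0"
proof -
  define w where "w = v - p"
  define a where "a = cinner m w"
  define s where "s = 1 / ((norm m)\<^sup>2 + 1)"
  define t where "t = complex_of_real s * a"
  have "0 < (norm m)\<^sup>2 + 1" by (simp add: add_nonneg_pos)
  then have s: "0 < s" "s * (norm m)\<^sup>2 < 1" by (simp_all add: s_def)
  have "p + scaleC t m \<in> M" using M by (simp add: csubspace_def)
  then have "(norm w)\<^sup>2 \<le> (norm (w - scaleC t m))\<^sup>2"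
    using nearest by (auto simp: w_def diff_diff_eq intro: power_mono)
  moreover have "t * cinner w m = complex_of_real (s * (cmod a)\<^sup>2)"
    by (simp add: t_def a_def cinner_commute[of w m] mult.assoc flip: complex_norm_square)
  moreover have "(cmod t)\<^sup>2 = s\<^sup>2 * (cmod a)\<^sup>2"
    using s by (simp add: t_def norm_mult power_mult_distrib)
  ultimately have "0 \<le> s * (cmod a)\<^sup>2 * (s * (norm m)\<^sup>2 - 2)"
    unfolding power2_norm_diff_scaleC by (simp add: algebra_simps power2_eq_square)
  with s have "(cmod a)\<^sup>2 \<le> 0" by (simp add: zero_le_mult_iff mult_le_0_iff)
  then show ?thesis by (simp add: a_def w_def)
qed

lemma closed_csubspace_projection:
  fixes M :: "'a::chilbert set"
  assumes "csubspace M" "closed M"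
  shows "\<exists>p\<in>M. \<forall>m\<in>M. cinner m (v - p) = 0"
  using closed_csubspace_nearest_point[OF assms] nearest_point_orthogonal[OF assms(1)] by blast

lemma mem_closed_csubspace_if_orthogonal:
  fixes M :: "'a::chilbert set"
  assumes "csubspace M" "closed M"
    and orth: "\<And>q. \<forall>m\<in>M. cinner m q = 0 \<Longrightarrow> cinner q v = 0"
  shows "v \<in> M"
proof -
  obtain p where p: "p \<in> M" "\<forall>m\<in>M. cinner m (v - p) = 0"
    using closed_csubspace_projection[OF assms(1,2)] by blast
  have "cinner (v - p) v = 0" using orth p(2) by blast
  moreover have "cinner (v - p) p = 0" using p by (metis cinner_commute complex_cnj_zero)
  ultimately have "cinner (v - p) (v - p) = 0" by (simp add: cinner_diff_right)
  then show ?thesis using p(1) by (simp add: cinner_self_eq_zero)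
qed

section \<open>Linear relations and their adjoints\<close>

lemma lin_rel_add: "lin_rel T \<Longrightarrow> (a, b) \<in> T \<Longrightarrow> (a', b') \<in> T \<Longrightarrow> (a + a', b + b') \<in> T"
  unfolding lin_rel_def by blast

lemma lin_rel_scaleC: "lin_rel T \<Longrightarrow> (a, b) \<in> T \<Longrightarrow> (scaleC s a, scaleC s b) \<in> T"
  unfolding lin_rel_def by blast

lemma lin_rel_diff: "lin_rel T \<Longrightarrow> (a, b) \<in> T \<Longrightarrow> (a', b') \<in> T \<Longrightarrow> (a - a', b - b') \<in> T"
  using lin_rel_add[of T a b "- a'" "- b'"] lin_rel_scaleC[of T a' b' "-1"]
  by (simp add: scaleC_minus_one)

lemma rplus_iff: "(x, y) \<in> rplus c T \<longleftrightarrow> (x, y - scaleR c x) \<in> T"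
  unfolding rplus_def by force

lemma rshift_iff: "(x, y) \<in> rshift c T \<longleftrightarrow> (x, y + scaleR c x) \<in> T"
  unfolding rshift_def by force

lemma Range_rshift_iff: "l \<in> Range (rshift c T) \<longleftrightarrow> (\<exists>x. (x, l + scaleR c x) \<in> T)"
  by (auto simp: rshift_iff)

lemma rplus_inject: "rplus c A = rplus c B \<longleftrightarrow> A = B"
proof
  assume "rplus c A = rplus c B"
  then have "(x, y + scaleR c x) \<in> rplus c A \<longleftrightarrow> (x, y + scaleR c x) \<in> rplus c B" for x y
    by simp
  then show "A = B" by (auto simp: rplus_iff)
qed simp

lemma rsum_eig_rel_iff:
  "(x, y) \<in> rsum A (eig_rel c T)
    \<longleftrightarrow> (\<exists>f g. (f, g) \<in> A \<and> (x - f, scaleR c (x - f)) \<in> T \<and> y = g + scaleR c (x - f))"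
  unfolding rsum_def eig_rel_def by force

lemma Range_closure_subset: "Range (closure T) \<subseteq> closure (Range T)"
proof -
  have "snd ` closure T \<subseteq> closure (snd ` T)"
    by (intro image_closure_subset continuous_on_snd continuous_on_id closure_subset) simp
  then show ?thesis by (simp add: Range_snd)
qed

lemma adj_iff: "(h, k) \<in> adj T \<longleftrightarrow> (\<forall>f g. (f, g) \<in> T \<longrightarrow> cinner g h = cinner f k)"
  by (simp add: adj_def)

lemma lin_rel_adj: "lin_rel (adj T)"
  unfolding lin_rel_def adj_iff by (simp add: cinner_add_right cinner_scaleC_right)

lemma adj_antimono: "S \<subseteq> T \<Longrightarrow> adj T \<subseteq> adj S"
  unfolding adj_def by blast

lemma subset_adj_adj: "T \<subseteq> adj (adj T)"
proof
  fix x assume x: "x \<in> T"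
  obtain a b where ab: "x = (a, b)" by (cases x)
  have "cinner k a = cinner h b" if "(h, k) \<in> adj T" for h k
  proof -
    have "cinner b h = cinner a k" using that x ab by (simp add: adj_iff)
    then show ?thesis using cinner_commute[of k a] cinner_commute[of h b] by simp
  qed
  then show "x \<in> adj (adj T)" using ab by (simp add: adj_iff)
qed

lemma adj_adj_adj: "adj (adj (adj T)) = adj T"
  by (simp add: adj_antimono subset_adj_adj subset_antisym)

lemma closed_adj: "closed (adj (T :: ('a::complex_inner \<times> 'b::complex_inner) set))"
  unfolding closed_sequential_limits
proof (intro allI impI, elim conjE)
  fix x :: "nat \<Rightarrow> 'b \<times> 'a" and l
  assume x: "\<forall>n. x n \<in> adj T" and lim: "x \<longlonglongrightarrow> l"
  obtain h k where l: "l = (h, k)" by (cases l)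
  have "cinner g h = cinner f k" if "(f, g) \<in> T" for f g
  proof -
    have "(\<lambda>n. cinner g (fst (x n))) \<longlonglongrightarrow> cinner g h"
      "(\<lambda>n. cinner f (snd (x n))) \<longlonglongrightarrow> cinner f k"
      using tendsto_fst[OF lim] tendsto_snd[OF lim] l by (auto intro!: tendsto_cinner)
    moreover have "cinner g (fst (x n)) = cinner f (snd (x n))" for n
      using x[rule_format, of n] that by (cases "x n") (simp add: adj_iff)
    ultimately show ?thesis using LIMSEQ_unique by fastforce
  qed
  then show "l \<in> adj T" using l by (simp add: adj_iff)
qed

lemma adj_adj_subset_closure:
  fixes T :: "('a::chilbert \<times> 'b::chilbert) set"
  assumes "lin_rel T"
  shows "adj (adj T) \<subseteq> closure T"
proof
  fix v assume v: "v \<in> adj (adj T)"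
  obtain v1 v2 where vv: "v = (v1, v2)" by (cases v)
  show "v \<in> closure T"
  proof (rule mem_closed_csubspace_if_orthogonal)
    show "csubspace (closure T)" using assms csubspace_closure lin_rel_iff_csubspace by blast
    fix q assume q: "\<forall>m\<in>closure T. cinner m q = 0"
    obtain q1 q2 where qq: "q = (q1, q2)" by (cases q)
    have "cinner g (- q2) = cinner f q1" if "(f, g) \<in> T" for f g
    proof -
      have "cinner (f, g) q = 0" using q that closure_subset by blast
      then show ?thesis by (simp add: qq cinner_Pair) (metis add_eq_0_iff2)
    qed
    then have "(- q2, q1) \<in> adj T" by (simp add: adj_iff)
    moreover have "(v1, v2) \<in> adj (adj T)" using v vv by simp
    ultimately have "cinner q1 v1 = cinner (- q2) v2"
      unfolding adj_iff[of v1 v2 "adj T"] by blast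
    then show "cinner q v = 0" by (simp add: qq vv cinner_Pair)
  qed simp
qed

lemma adj_adj_eq_closure:
  fixes T :: "('a::chilbert \<times> 'b::chilbert) set"
  assumes "lin_rel T"
  shows "adj (adj T) = closure T"
  using adj_adj_subset_closure[OF assms] closure_minimal[OF subset_adj_adj closed_adj] by blast

lemma cinner_adj_kernel_closure_Range:
  assumes "(f, 0) \<in> adj T" "l \<in> closure (Range T)"
  shows "cinner l f = 0"
proof -
  have "Range T \<subseteq> {l. cinner l f = 0}"
    using assms(1) by (auto simp: adj_iff)
  moreover have "closed {l. cinner l f = 0}"
    by (intro closed_Collect_eq continuous_on_cinner continuous_on_id continuous_on_const)
  ultimately show ?thesis using assms(2) closure_minimal by blast
qed

lemma relcomp_adj_symmetric: "T O adj T \<subseteq> adj (T O adj T)"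
proof
  fix x assume "x \<in> T O adj T"
  then obtain f k l where x: "x = (f, l)" "(f, k) \<in> T" "(k, l) \<in> adj T" by auto
  have "cinner l' f = cinner f' l" if fl': "(f', l') \<in> T O adj T" for f' l'
  proof -
    obtain k' where k': "(f', k') \<in> T" "(k', l') \<in> adj T" using fl' by auto
    have "cinner k k' = cinner f l'" "cinner k' k = cinner f' l"
      using x k' by (simp_all add: adj_iff)
    then show ?thesis
      using cinner_commute[of k' k] cinner_commute[of l' f] cinner_commute[of f' l] by simp
  qed
  then show "x \<in> adj (T O adj T)" using x by (auto simp: adj_iff)
qed

text \<open>Projecting (w, 0) onto the graph of T shows that 1 + T* T is surjective.\<close>
lemma relcomp_adj_plus_id_surj:
  fixes T :: "('a::chilbert \<times> 'b::chilbert) set"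
  assumes "lin_rel T" "closed T"
  shows "\<exists>x. (x, w - x) \<in> T O adj T"
proof -
  obtain x y where p: "(x, y) \<in> T" "\<forall>m\<in>T. cinner m ((w, 0) - (x, y)) = 0"
    using closed_csubspace_projection[of T "(w, 0)"] assms lin_rel_iff_csubspace by force
  have "cinner g y = cinner f (w - x)" if "(f, g) \<in> T" for f g
    using p(2) that by (force simp: cinner_Pair add_eq_0_iff)
  then have "(y, w - x) \<in> adj T" by (simp add: adj_iff)
  then show ?thesis using p(1) by blast
qed

lemma relcomp_adj_selfadjoint:
  fixes T :: "('a::chilbert \<times> 'b::chilbert) set"
  assumes "lin_rel T" "closed T"
  shows "adj (T O adj T) = T O adj T"
proof
  show "adj (T O adj T) \<subseteq> T O adj T"
  proof
    fix v assume v: "v \<in> adj (T O adj T)"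
    obtain h l where hl: "v = (h, l)" by (cases v)
    obtain x where x: "(x, (h + l) - x) \<in> T O adj T"
      using relcomp_adj_plus_id_surj[OF assms] by blast
    define z where "z = h - x"
    have "(h - x, l - ((h + l) - x)) \<in> adj (T O adj T)"
      using lin_rel_diff[OF lin_rel_adj] v hl x relcomp_adj_symmetric by blast
    then have z: "(z, - z) \<in> adj (T O adj T)" by (simp add: z_def algebra_simps)
    obtain x' where "(x', z - x') \<in> T O adj T"
      using relcomp_adj_plus_id_surj[OF assms] by blast
    then have "cinner (z - x') z = cinner x' (- z)" using z by (auto simp: adj_iff)
    then have "z = 0" by (simp add: cinner_diff_left cinner_self_eq_zero)
    then show "v \<in> T O adj T" using x hl by (simp add: z_def)
  qed
qed (rule relcomp_adj_symmetric)

lemma cinner_shift_eq_iff: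
  "cinner (\<phi>' - scaleR c \<phi>) h = cinner \<phi> (h' - scaleR c h) \<longleftrightarrow> cinner \<phi>' h = cinner \<phi> h'"
  by (simp add: cinner_simps)

lemma rplus_symmetric: "T \<subseteq> adj T \<Longrightarrow> rplus c T \<subseteq> adj (rplus c T)"
  unfolding rplus_def by (fastforce simp: adj_iff cinner_simps)

lemma semibounded_lb_le:
  assumes "semibounded_lb S \<gamma>" "(\<phi>, \<phi>') \<in> S"
  shows "\<gamma> * (norm \<phi>)\<^sup>2 \<le> Re (cinner \<phi>' \<phi>)"
proof -
  have ne: "lb_set S \<noteq> {}" and g: "\<gamma> = Sup (lb_set S)"
    using assms(1) by (auto simp: semibounded_lb_def)
  have le: "b * (norm \<phi>)\<^sup>2 \<le> Re (cinner \<phi>' \<phi>)" if "b \<in> lb_set S" for b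
    using that assms(2) by (auto simp: lb_set_def)
  show ?thesis
  proof (cases "\<phi> = 0")
    case True
    then show ?thesis using ne le by force
  next
    case False
    then have "b \<le> Re (cinner \<phi>' \<phi>) / (norm \<phi>)\<^sup>2" if "b \<in> lb_set S" for b
      using le[OF that] by (simp add: pos_le_divide_eq)
    then have "\<gamma> \<le> Re (cinner \<phi>' \<phi>) / (norm \<phi>)\<^sup>2" unfolding g using ne by (intro cSup_least) auto
    then show ?thesis using False by (simp add: pos_le_divide_eq)
  qed
qed

section \<open>The companion relation of a representing map\<close>

locale representing_map =
  fixes S :: "('a::chilbert \<times> 'a) set" and c :: real and Q :: "'a \<Rightarrow> 'b::chilbert"
  assumes lin_rel_S: "lin_rel S" and rep_map: "rep_map S c Q"
begin

abbreviation J :: "('b \<times> 'a) set" where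
  "J \<equiv> companion S c Q"

lemma Q_add: "\<phi> \<in> Domain S \<Longrightarrow> \<psi> \<in> Domain S \<Longrightarrow> Q (\<phi> + \<psi>) = Q \<phi> + Q \<psi>"
  using rep_map by (simp add: rep_map_def)

lemma Q_scaleC: "\<phi> \<in> Domain S \<Longrightarrow> Q (scaleC a \<phi>) = scaleC a (Q \<phi>)"
  using rep_map by (simp add: rep_map_def)

lemma Q_diff:
  assumes "\<phi> \<in> Domain S" "\<psi> \<in> Domain S"
  shows "Q (\<phi> - \<psi>) = Q \<phi> - Q \<psi>"
proof -
  obtain \<psi>' where "(\<psi>, \<psi>') \<in> S" using assms(2) by blast
  then have "(- \<psi>, - \<psi>') \<in> S"
    using lin_rel_scaleC[OF lin_rel_S, of \<psi> \<psi>' "-1"] by (simp add: scaleC_minus_one)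
  then have "- \<psi> \<in> Domain S" by blast
  then show ?thesis
    using Q_add[OF assms(1), of "- \<psi>"] Q_scaleC[OF assms(2), of "-1"] by (simp add: scaleC_minus_one)
qed

lemma cinner_shift_eq_cinner_Q:
  "(\<phi>, \<phi>') \<in> S \<Longrightarrow> \<psi> \<in> Domain S \<Longrightarrow> cinner (\<phi>' - scaleR c \<phi>) \<psi> = cinner (Q \<phi>) (Q \<psi>)"
  using rep_map unfolding rep_map_def by (simp add: cinner_diff_left cinner_scaleR_left)

lemma cinner_shift_self_eq_norm_Q:
  assumes "(\<phi>, \<phi>') \<in> S"
  shows "cinner (\<phi>' - scaleR c \<phi>) \<phi> = complex_of_real ((norm (Q \<phi>))\<^sup>2)"
proof -
  have "cinner (\<phi>' - scaleR c \<phi>) \<phi> = cinner (Q \<phi>) (Q \<phi>)"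
    using assms by (rule cinner_shift_eq_cinner_Q) (rule Domain.DomainI[OF assms])
  then show ?thesis by (simp only: cinner_self_eq_power2_norm)
qed

lemma S_symmetric: "S \<subseteq> adj S"
proof
  fix v assume v: "v \<in> S"
  obtain \<psi> \<psi>' where v_eq: "v = (\<psi>, \<psi>')" by (cases v)
  have "cinner \<phi>' \<psi> = cinner \<phi> \<psi>'" if "(\<phi>, \<phi>') \<in> S" for \<phi> \<phi>'
  proof -
    have "cinner \<phi>' \<psi> = complex_of_real c * cinner \<phi> \<psi> + cinner (Q \<phi>) (Q \<psi>)"
      "cinner \<psi>' \<phi> = complex_of_real c * cinner \<psi> \<phi> + cinner (Q \<psi>) (Q \<phi>)"
      using rep_map that v v_eq unfolding rep_map_def by blast+
    then show ?thesis
      using cinner_commute[of \<phi> \<psi>'] cinner_commute[of \<psi> \<phi>] cinner_commute[of "Q \<psi>" "Q \<phi>"]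
      by simp
  qed
  then show "v \<in> adj S" using v_eq by (auto simp: adj_iff)
qed

lemma closure_subset_adj: "closure S \<subseteq> adj S"
  by (rule closure_minimal[OF S_symmetric closed_adj])

lemma Range_rshift_subset_adj: "Range (rshift c S) \<subseteq> Range (rshift c (adj S))"
  unfolding rshift_def using S_symmetric by blast

lemma companion_iff:
  "(x, y) \<in> J \<longleftrightarrow> (\<exists>\<phi> \<phi>'. (\<phi>, \<phi>') \<in> S \<and> x = Q \<phi> \<and> y = \<phi>' - scaleR c \<phi>)"
  unfolding companion_def by auto

lemma lin_rel_companion: "lin_rel J"
  unfolding lin_rel_def
proof (intro conjI allI impI)
  have "(0, 0) \<in> S" using lin_rel_S by (simp add: lin_rel_def)
  moreover have "Q 0 = 0" using Q_diff[of 0 0] \<open>(0, 0) \<in> S\<close> by (simp add: Domain.DomainI)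
  ultimately show "(0, 0) \<in> J" unfolding companion_iff by force
next
  fix f g h k assume "(f, g) \<in> J" "(h, k) \<in> J"
  then obtain \<phi> \<phi>' \<psi> \<psi>' where a: "(\<phi>, \<phi>') \<in> S" "f = Q \<phi>" "g = \<phi>' - scaleR c \<phi>"
    "(\<psi>, \<psi>') \<in> S" "h = Q \<psi>" "k = \<psi>' - scaleR c \<psi>"
    unfolding companion_iff by blast
  have "(\<phi> + \<psi>, \<phi>' + \<psi>') \<in> S" using lin_rel_add[OF lin_rel_S a(1) a(4)] .
  moreover have "Q (\<phi> + \<psi>) = f + h" using a Q_add by blast
  moreover have "(\<phi>' + \<psi>') - scaleR c (\<phi> + \<psi>) = g + k"
    unfolding a(3) a(6) by (simp add: algebra_simps)
  ultimately show "(f + h, g + k) \<in> J" unfolding companion_iff by metis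
next
  fix a f g assume "(f, g) \<in> J"
  then obtain \<phi> \<phi>' where b: "(\<phi>, \<phi>') \<in> S" "f = Q \<phi>" "g = \<phi>' - scaleR c \<phi>"
    unfolding companion_iff by blast
  have "(scaleC a \<phi>, scaleC a \<phi>') \<in> S" using lin_rel_scaleC[OF lin_rel_S b(1)] .
  moreover have "Q (scaleC a \<phi>) = scaleC a f" using b Q_scaleC by blast
  moreover have "scaleC a \<phi>' - scaleR c (scaleC a \<phi>) = scaleC a g"
    using b by (simp add: scaleC_diff_right scaleR_scaleC scaleC_scaleC mult.commute)
  ultimately show "(scaleC a f, scaleC a g) \<in> J" unfolding companion_iff by metis
qed

lemma Range_companion: "Range J = Range (rshift c S)"
proof (intro set_eqI iffI)
  fix l assume "l \<in> Range J"
  then obtain \<phi> \<phi>' where "(\<phi>, \<phi>') \<in> S" "l = \<phi>' - scaleR c \<phi>"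
    unfolding Range_iff companion_iff by blast
  then show "l \<in> Range (rshift c S)" unfolding Range_rshift_iff by (intro exI[of _ \<phi>]) simp
next
  fix l assume "l \<in> Range (rshift c S)"
  then obtain \<phi> where "(\<phi>, l + scaleR c \<phi>) \<in> S" by (auto simp: Range_rshift_iff)
  then show "l \<in> Range J" unfolding Range_iff companion_iff by force
qed

lemma graph_Q_subset_adj_companion: "\<psi> \<in> Domain S \<Longrightarrow> (\<psi>, Q \<psi>) \<in> adj J"
  unfolding adj_iff companion_iff using cinner_shift_eq_cinner_Q by blast

lemma adj_companion_kernel_iff: "(f, 0) \<in> adj J \<longleftrightarrow> (f, scaleR c f) \<in> adj S"
proof -
  have "(f, 0) \<in> adj J \<longleftrightarrow> (\<forall>\<phi> \<phi>'. (\<phi>, \<phi>') \<in> S \<longrightarrow> cinner (\<phi>' - scaleR c \<phi>) f = 0)"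
    unfolding adj_iff companion_iff by auto
  also have "\<dots> \<longleftrightarrow> (f, scaleR c f) \<in> adj S"
    unfolding adj_iff by (simp add: cinner_simps)
  finally show ?thesis .
qed

lemma adj_companion_Q_iff:
  assumes "\<psi> \<in> Domain S"
  shows "(x, Q \<psi>) \<in> adj J \<longleftrightarrow> (x - \<psi>, scaleR c (x - \<psi>)) \<in> adj S"
proof -
  have graph: "(\<psi>, Q \<psi>) \<in> adj J" using assms by (rule graph_Q_subset_adj_companion)
  have "(x, Q \<psi>) \<in> adj J \<longleftrightarrow> (x - \<psi>, 0) \<in> adj J"
  proof
    assume "(x, Q \<psi>) \<in> adj J"
    from lin_rel_diff[OF lin_rel_adj this graph] show "(x - \<psi>, 0) \<in> adj J" by simp
  next
    assume "(x - \<psi>, 0) \<in> adj J"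
    from lin_rel_add[OF lin_rel_adj this graph] show "(x, Q \<psi>) \<in> adj J" by simp
  qed
  then show ?thesis by (simp add: adj_companion_kernel_iff)
qed

lemma cinner_Q_closure_companion:
  assumes "(k, l) \<in> closure J" "\<psi> \<in> Domain S"
  shows "cinner (Q \<psi>) k = cinner \<psi> l"
proof -
  have "(\<psi>, Q \<psi>) \<in> adj (adj (adj J))"
    using graph_Q_subset_adj_companion[OF assms(2)] by (simp add: adj_adj_adj)
  then have "cinner l \<psi> = cinner k (Q \<psi>)"
    using assms(1) by (simp add: adj_iff adj_adj_eq_closure[OF lin_rel_companion])
  then show ?thesis by (metis cinner_commute)
qed

lemma closure_companion_iff:
  "(k, l) \<in> closure J \<longleftrightarrow> (\<exists>\<psi> \<psi>'. (\<forall>n. (\<psi> n, \<psi>' n) \<in> S) \<and>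
      (\<lambda>n. Q (\<psi> n)) \<longlonglongrightarrow> k \<and> (\<lambda>n. \<psi>' n - scaleR c (\<psi> n)) \<longlonglongrightarrow> l)"
proof
  assume "(k, l) \<in> closure J"
  then obtain x where x: "\<forall>n. x n \<in> J" "x \<longlonglongrightarrow> (k, l)" unfolding closure_sequential by blast
  have "\<forall>n. \<exists>\<phi> \<phi>'. (\<phi>, \<phi>') \<in> S \<and> x n = (Q \<phi>, \<phi>' - scaleR c \<phi>)"
    using x(1) unfolding companion_def by blast
  then obtain \<psi> \<psi>' where "\<forall>n. (\<psi> n, \<psi>' n) \<in> S \<and> x n = (Q (\<psi> n), \<psi>' n - scaleR c (\<psi> n))"
    by metis
  then show "\<exists>\<psi> \<psi>'. (\<forall>n. (\<psi> n, \<psi>' n) \<in> S) \<and>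
      (\<lambda>n. Q (\<psi> n)) \<longlonglongrightarrow> k \<and> (\<lambda>n. \<psi>' n - scaleR c (\<psi> n)) \<longlonglongrightarrow> l"
    using tendsto_fst[OF x(2)] tendsto_snd[OF x(2)] by auto
next
  assume "\<exists>\<psi> \<psi>'. (\<forall>n. (\<psi> n, \<psi>' n) \<in> S) \<and>
      (\<lambda>n. Q (\<psi> n)) \<longlonglongrightarrow> k \<and> (\<lambda>n. \<psi>' n - scaleR c (\<psi> n)) \<longlonglongrightarrow> l"
  then obtain \<psi> \<psi>' where \<psi>: "\<forall>n. (\<psi> n, \<psi>' n) \<in> S" "(\<lambda>n. Q (\<psi> n)) \<longlonglongrightarrow> k"
    "(\<lambda>n. \<psi>' n - scaleR c (\<psi> n)) \<longlonglongrightarrow> l" by blast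
  have "\<forall>n. (Q (\<psi> n), \<psi>' n - scaleR c (\<psi> n)) \<in> J" using \<psi>(1) unfolding companion_iff by blast
  then show "(k, l) \<in> closure J" unfolding closure_sequential
    by (intro exI[of _ "\<lambda>n. (Q (\<psi> n), \<psi>' n - scaleR c (\<psi> n))"]) (simp add: \<psi> tendsto_Pair)
qed

lemma Range_closure_companion_iff:
  "l \<in> Range (closure J) \<longleftrightarrow> (\<exists>\<psi> \<psi>'. (\<forall>n. (\<psi> n, \<psi>' n) \<in> S) \<and>
      (\<lambda>n. \<psi>' n - scaleR c (\<psi> n)) \<longlonglongrightarrow> l \<and> Cauchy (\<lambda>n. Q (\<psi> n)))"
  unfolding Range_iff closure_companion_iff Cauchy_convergent_iff convergent_def by blast

text \<open>The form of (S - c)\<inverse> at u is cinner g u for any (g, u) \<in> S - c; it does not depend on g.\<close>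
lemma form_inverse_shift_eq:
  assumes g: "(g, u + scaleR c g) \<in> S" and a: "(a, u + scaleR c a) \<in> S"
  shows "cinner g u = complex_of_real ((norm (Q a))\<^sup>2)"
proof -
  have "cinner u g = cinner (Q a) (Q g)" "cinner u a = cinner (Q g) (Q a)"
    using cinner_shift_eq_cinner_Q[OF a, of g] cinner_shift_eq_cinner_Q[OF g, of a] g a by auto
  moreover have "cinner u a = complex_of_real ((norm (Q a))\<^sup>2)"
    using cinner_shift_self_eq_norm_Q[OF a] by simp
  ultimately show ?thesis by (metis cinner_commute)
qed

text \<open>The left-hand side is the Cauchy condition for u in the definition of form_closure_dom.\<close>
lemma form_Cauchy_iff_Cauchy_Q:
  assumes S: "\<forall>n. (\<psi> n, \<psi>' n) \<in> S" and u: "u = (\<lambda>n. \<psi>' n - scaleR c (\<psi> n))"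
  shows "(\<forall>e>0. \<exists>N. \<forall>n\<ge>N. \<forall>m\<ge>N. \<forall>g. (u n - u m, g) \<in> converse (rshift c S) \<longrightarrow>
            cmod (cinner g (u n - u m)) < e)
    \<longleftrightarrow> Cauchy (\<lambda>n. Q (\<psi> n))"
proof -
  have diff: "(\<psi> n - \<psi> m, u n - u m + scaleR c (\<psi> n - \<psi> m)) \<in> S" for n m
    using lin_rel_diff[OF lin_rel_S S[rule_format, of n] S[rule_format, of m]]
    by (simp add: u algebra_simps)
  have form: "cmod (cinner g (u n - u m)) = (norm (Q (\<psi> n) - Q (\<psi> m)))\<^sup>2"
    if "(u n - u m, g) \<in> converse (rshift c S)" for n m g
  proof -
    have "\<psi> n \<in> Domain S" "\<psi> m \<in> Domain S" using S by blast+
    then show ?thesis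
      using form_inverse_shift_eq[OF _ diff] that by (auto simp: rshift_iff Q_diff norm_power)
  qed
  have "(\<forall>g. (u n - u m, g) \<in> converse (rshift c S) \<longrightarrow> cmod (cinner g (u n - u m)) < e)
      \<longleftrightarrow> (norm (Q (\<psi> n) - Q (\<psi> m)))\<^sup>2 < e" for n m e
  proof
    have "(u n - u m, \<psi> n - \<psi> m) \<in> converse (rshift c S)" using diff by (simp add: rshift_iff)
    then show "(norm (Q (\<psi> n) - Q (\<psi> m)))\<^sup>2 < e"
      if "\<forall>g. (u n - u m, g) \<in> converse (rshift c S) \<longrightarrow> cmod (cinner g (u n - u m)) < e"
      using that form by fastforce
  qed (simp add: form)
  then show ?thesis unfolding Cauchy_iff_power2_norm by simp
qed

lemma form_closure_dom_eq: "form_closure_dom (converse (rshift c S)) = Range (closure J)"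
proof (intro set_eqI iffI)
  fix l assume "l \<in> form_closure_dom (converse (rshift c S))"
  then obtain u where u: "\<forall>n. u n \<in> Domain (converse (rshift c S))" "u \<longlonglongrightarrow> l"
    and form: "\<forall>e>0. \<exists>N. \<forall>n\<ge>N. \<forall>m\<ge>N. \<forall>g. (u n - u m, g) \<in> converse (rshift c S) \<longrightarrow>
           cmod (cinner g (u n - u m)) < e"
    unfolding form_closure_dom_def by blast
  have "\<forall>n. \<exists>x. (x, u n + scaleR c x) \<in> S" using u(1) by (simp add: Range_rshift_iff)
  then obtain \<psi> where \<psi>: "\<forall>n. (\<psi> n, u n + scaleR c (\<psi> n)) \<in> S" by metis
  define \<psi>' where "\<psi>' = (\<lambda>n. u n + scaleR c (\<psi> n))"
  have S': "\<forall>n. (\<psi> n, \<psi>' n) \<in> S" using \<psi> by (simp add: \<psi>'_def)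
  have u_eq: "u = (\<lambda>n. \<psi>' n - scaleR c (\<psi> n))" by (simp add: \<psi>'_def)
  have "Cauchy (\<lambda>n. Q (\<psi> n))" using form_Cauchy_iff_Cauchy_Q[OF S' u_eq] form by simp
  then show "l \<in> Range (closure J)"
    unfolding Range_closure_companion_iff using S' u(2) unfolding u_eq by blast
next
  fix l assume "l \<in> Range (closure J)"
  then obtain \<psi> \<psi>' where \<psi>: "\<forall>n. (\<psi> n, \<psi>' n) \<in> S"
    "(\<lambda>n. \<psi>' n - scaleR c (\<psi> n)) \<longlonglongrightarrow> l" "Cauchy (\<lambda>n. Q (\<psi> n))"
    unfolding Range_closure_companion_iff by blast
  have "\<forall>n. \<psi>' n - scaleR c (\<psi> n) \<in> Domain (converse (rshift c S))"
    using \<psi>(1) by (simp add: Range_rshift_iff) (metis diff_add_cancel)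
  with \<psi> form_Cauchy_iff_Cauchy_Q[OF \<psi>(1) refl] show "l \<in> form_closure_dom (converse (rshift c S))"
    unfolding form_closure_dom_def by (intro CollectI exI[of _ "\<lambda>n. \<psi>' n - scaleR c (\<psi> n)"]) simp
qed

section \<open>Krein type extensions\<close>

lemma krein_k_eq: "krein_k S c Q = rsum S (eig_rel c (adj S))"
proof (intro set_eqI, clarify)
  fix x y
  have "(x, y) \<in> krein_k S c Q
      \<longleftrightarrow> (\<exists>\<psi> \<psi>'. (\<psi>, \<psi>') \<in> S \<and> (x, Q \<psi>) \<in> adj J \<and> y - scaleR c x = \<psi>' - scaleR c \<psi>)"
    unfolding krein_k_def rplus_iff relcomp_unfold companion_iff by blast
  also have "\<dots> \<longleftrightarrow> (\<exists>\<psi> \<psi>'. (\<psi>, \<psi>') \<in> S \<and> (x - \<psi>, scaleR c (x - \<psi>)) \<in> adj S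
      \<and> y = \<psi>' + scaleR c (x - \<psi>))"
    by (intro ex_cong1 conj_cong refl adj_companion_Q_iff) (auto simp: algebra_simps)
  also have "\<dots> \<longleftrightarrow> (x, y) \<in> rsum S (eig_rel c (adj S))"
    by (simp add: rsum_eig_rel_iff)
  finally show "(x, y) \<in> krein_k S c Q \<longleftrightarrow> (x, y) \<in> rsum S (eig_rel c (adj S))" .
qed

lemma symmetric_extension_subset_krein_k:
  assumes H: "lin_rel H" "H \<subseteq> adj H" "S \<subseteq> H" and ran: "Range (rshift c H) \<subseteq> Range (rshift c S)"
  shows "H \<subseteq> krein_k S c Q"
proof (clarify)
  fix h h' assume hH: "(h, h') \<in> H"
  then have "(h, h' - scaleR c h) \<in> rshift c H" by (simp add: rshift_iff)
  then have "h' - scaleR c h \<in> Range (rshift c S)" using ran by blast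
  then obtain \<psi> where \<psi>: "(\<psi>, h' - scaleR c h + scaleR c \<psi>) \<in> S"
    by (auto simp: Range_rshift_iff)
  define \<psi>' where "\<psi>' = h' - scaleR c h + scaleR c \<psi>"
  have "(\<psi>, \<psi>') \<in> H" using \<psi> H(3) by (auto simp: \<psi>'_def)
  then have "(h - \<psi>, h' - \<psi>') \<in> H" by (rule lin_rel_diff[OF H(1) hH])
  then have "(h - \<psi>, scaleR c (h - \<psi>)) \<in> adj S"
    using H(2) adj_antimono[OF H(3)] by (force simp: \<psi>'_def algebra_simps)
  moreover have "h' = \<psi>' + scaleR c (h - \<psi>)" by (simp add: \<psi>'_def algebra_simps)
  ultimately show "(h, h') \<in> krein_k S c Q"
    using \<psi> unfolding krein_k_eq rsum_eig_rel_iff \<psi>'_def by blast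
qed

lemma krein_k_subset_krein_K: "krein_k S c Q \<subseteq> krein_K S c Q"
  unfolding krein_k_def krein_K_def rplus_def using subset_adj_adj by blast

lemma krein_K_iff:
  "(h, h') \<in> krein_K S c Q \<longleftrightarrow> (h, h') \<in> adj S \<and> h' - scaleR c h \<in> Range (closure J)"
proof -
  have krein_K: "(h, h') \<in> krein_K S c Q \<longleftrightarrow> (\<exists>k. (h, k) \<in> adj J \<and> (k, h' - scaleR c h) \<in> closure J)"
    by (auto simp: krein_K_def rplus_iff adj_adj_eq_closure[OF lin_rel_companion])
  have key: "(h, k) \<in> adj J \<longleftrightarrow> (h, h') \<in> adj S" if "(k, h' - scaleR c h) \<in> closure J" for k
  proof -
    have "cinner (\<phi>' - scaleR c \<phi>) h = cinner (Q \<phi>) k \<longleftrightarrow> cinner \<phi>' h = cinner \<phi> h'"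
      if "(\<phi>, \<phi>') \<in> S" for \<phi> \<phi>'
      using cinner_Q_closure_companion[OF \<open>(k, _) \<in> closure J\<close>] that cinner_shift_eq_iff
      by (metis Domain.DomainI)
    then show ?thesis unfolding adj_iff companion_iff by blast
  qed
  show ?thesis unfolding krein_K using key by blast
qed

lemma krein_K_eq:
  "krein_K S c Q = {(\<phi>, \<phi>'). (\<phi>, \<phi>') \<in> adj S \<and>
                     \<phi>' - scaleR c \<phi> \<in> form_closure_dom (converse (rshift c S))}"
  by (auto simp: krein_K_iff form_closure_dom_eq)

lemma krein_K_symmetric: "krein_K S c Q \<subseteq> adj (krein_K S c Q)"
  unfolding krein_K_def by (rule rplus_symmetric[OF relcomp_adj_symmetric])

lemma selfadjoint_extension_eq_krein_K:
  assumes H: "H = adj H" "S \<subseteq> H"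
    and ran: "Range (rshift c H) \<subseteq> form_closure_dom (converse (rshift c S))"
  shows "H = krein_K S c Q"
proof
  show HK: "H \<subseteq> krein_K S c Q"
  proof (clarify)
    fix h h' assume hH: "(h, h') \<in> H"
    then have "(h, h' - scaleR c h) \<in> rshift c H" by (simp add: rshift_iff)
    then have "h' - scaleR c h \<in> form_closure_dom (converse (rshift c S))" using ran by blast
    moreover have "(h, h') \<in> adj S" using hH H adj_antimono[OF H(2)] by blast
    ultimately show "(h, h') \<in> krein_K S c Q" by (simp add: krein_K_eq)
  qed
  show "krein_K S c Q \<subseteq> H"
    using krein_K_symmetric adj_antimono[OF HK] H(1) by blast
qed

lemma norm_Q_lower_bound:
  assumes "semibounded_lb S \<gamma>" "(a, a') \<in> S"
  shows "(\<gamma> - c) * (norm a)\<^sup>2 \<le> (norm (Q a))\<^sup>2"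
proof -
  have "(norm (Q a))\<^sup>2 = Re (cinner a' a) - c * (norm a)\<^sup>2"
    using arg_cong[OF cinner_shift_self_eq_norm_Q[OF assms(2)], of Re]
    by (simp add: cinner_diff_left cinner_scaleR_left power2_norm_eq_Re_cinner)
  then show ?thesis using semibounded_lb_le[OF assms] by (simp add: left_diff_distrib)
qed

lemma Cauchy_if_Cauchy_Q:
  assumes "semibounded_lb S \<gamma>" "c < \<gamma>"
    and S: "\<forall>n. (\<psi> n, \<psi>' n) \<in> S" and "Cauchy (\<lambda>n. Q (\<psi> n))"
  shows "Cauchy \<psi>"
  unfolding Cauchy_iff_power2_norm
proof (intro allI impI)
  fix e :: real assume "0 < e"
  define \<delta> where "\<delta> = \<gamma> - c"
  have \<delta>: "0 < \<delta>" using assms(2) by (simp add: \<delta>_def)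
  have "0 < \<delta> * e" using \<delta> \<open>0 < e\<close> by simp
  then obtain N where N: "\<forall>m\<ge>N. \<forall>n\<ge>N. (norm (Q (\<psi> m) - Q (\<psi> n)))\<^sup>2 < \<delta> * e"
    using \<open>Cauchy (\<lambda>n. Q (\<psi> n))\<close> unfolding Cauchy_iff_power2_norm by blast
  have "(norm (\<psi> m - \<psi> n))\<^sup>2 < e" if "m \<ge> N" "n \<ge> N" for m n
  proof -
    have "(\<psi> m - \<psi> n, \<psi>' m - \<psi>' n) \<in> S"
      using lin_rel_diff[OF lin_rel_S] S by blast
    then have "\<delta> * (norm (\<psi> m - \<psi> n))\<^sup>2 \<le> (norm (Q (\<psi> m - \<psi> n)))\<^sup>2"
      unfolding \<delta>_def by (rule norm_Q_lower_bound[OF assms(1)])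
    also have "\<dots> = (norm (Q (\<psi> m) - Q (\<psi> n)))\<^sup>2"
    proof -
      have "\<psi> m \<in> Domain S" "\<psi> n \<in> Domain S" using S by blast+
      then show ?thesis by (simp only: Q_diff)
    qed
    also have "\<dots> < \<delta> * e" using N that by blast
    finally show ?thesis using \<delta> by simp
  qed
  then show "\<exists>N. \<forall>m\<ge>N. \<forall>n\<ge>N. (norm (\<psi> m - \<psi> n))\<^sup>2 < e" by blast
qed

lemma Cauchy_Q_if_convergent:
  assumes S: "\<forall>n. (\<psi> n, \<psi>' n) \<in> S" and "\<psi> \<longlonglongrightarrow> p" "\<psi>' \<longlonglongrightarrow> q"
  shows "Cauchy (\<lambda>n. Q (\<psi> n))"
  unfolding Cauchy_iff_power2_norm
proof (intro allI impI)
  fix e :: real assume "0 < e"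
  define u where "u = (\<lambda>n. \<psi>' n - scaleR c (\<psi> n))"
  have "u \<longlonglongrightarrow> q - scaleR c p" unfolding u_def using assms(2,3) by (intro tendsto_intros)
  then have "Cauchy u" by (rule LIMSEQ_imp_Cauchy)
  then obtain N1 where N1: "\<forall>m\<ge>N1. \<forall>n\<ge>N1. norm (u m - u n) < 1"
    unfolding Cauchy_iff using zero_less_one by blast
  obtain N2 where N2: "\<forall>m\<ge>N2. \<forall>n\<ge>N2. norm (\<psi> m - \<psi> n) < e"
    using LIMSEQ_imp_Cauchy[OF assms(2)] \<open>0 < e\<close> unfolding Cauchy_iff by blast
  have "(norm (Q (\<psi> m) - Q (\<psi> n)))\<^sup>2 < e" if "m \<ge> max N1 N2" "n \<ge> max N1 N2" for m n
  proof -
    define a where "a = \<psi> m - \<psi> n"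
    have a: "(a, \<psi>' m - \<psi>' n) \<in> S" using lin_rel_diff[OF lin_rel_S] S by (simp add: a_def)
    have "\<psi> m \<in> Domain S" "\<psi> n \<in> Domain S" using S by blast+
    then have "Q a = Q (\<psi> m) - Q (\<psi> n)" by (simp only: a_def Q_diff)
    moreover have "\<psi>' m - \<psi>' n - scaleR c a = u m - u n" by (simp add: a_def u_def algebra_simps)
    ultimately have "(norm (Q (\<psi> m) - Q (\<psi> n)))\<^sup>2 = Re (cinner (u m - u n) a)"
      using cinner_shift_self_eq_norm_Q[OF a] by simp
    also have "\<dots> \<le> norm (u m - u n) * norm a"
      using complex_Re_le_cmod norm_cinner_le order_trans by blast
    also have "\<dots> \<le> 1 * norm a"
      using N1 that by (intro mult_right_mono) (simp_all add: less_imp_le)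
    also have "\<dots> < e" using N2 that by (simp add: a_def)
    finally show ?thesis .
  qed
  then show "\<exists>N. \<forall>m\<ge>N. \<forall>n\<ge>N. (norm (Q (\<psi> m) - Q (\<psi> n)))\<^sup>2 < e" by blast
qed

lemma krein_K_subset_closure_sum:
  assumes "semibounded_lb S \<gamma>" "c < \<gamma>"
  shows "krein_K S c Q \<subseteq> rsum (closure S) (eig_rel c (adj S))"
proof (clarify)
  fix h h' assume "(h, h') \<in> krein_K S c Q"
  then obtain \<psi> \<psi>' where adjS: "(h, h') \<in> adj S" and S: "\<forall>n. (\<psi> n, \<psi>' n) \<in> S"
    and u: "(\<lambda>n. \<psi>' n - scaleR c (\<psi> n)) \<longlonglongrightarrow> h' - scaleR c h" and "Cauchy (\<lambda>n. Q (\<psi> n))"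
    unfolding krein_K_iff Range_closure_companion_iff by blast
  then obtain p where p: "\<psi> \<longlonglongrightarrow> p"
    using Cauchy_if_Cauchy_Q[OF assms] Cauchy_convergent_iff convergent_def by blast
  define q where "q = h' - scaleR c h + scaleR c p"
  have "(\<lambda>n. (\<psi>' n - scaleR c (\<psi> n)) + scaleR c (\<psi> n)) \<longlonglongrightarrow> q"
    unfolding q_def by (intro tendsto_intros u p)
  then have "(\<lambda>n. (\<psi> n, \<psi>' n)) \<longlonglongrightarrow> (p, q)" using p by (simp add: tendsto_Pair)
  then have pq: "(p, q) \<in> closure S"
    unfolding closure_sequential using S by (intro exI[of _ "\<lambda>n. (\<psi> n, \<psi>' n)"]) simp
  then have "(h - p, h' - q) \<in> adj S"
    using lin_rel_diff[OF lin_rel_adj adjS] closure_subset_adj by blast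
  moreover have "h' - q = scaleR c (h - p)" "h' = q + scaleR c (h - p)"
    by (simp_all add: q_def algebra_simps)
  ultimately show "(h, h') \<in> rsum (closure S) (eig_rel c (adj S))"
    using pq unfolding rsum_eig_rel_iff by auto
qed

lemma closure_sum_subset_krein_K: "rsum (closure S) (eig_rel c (adj S)) \<subseteq> krein_K S c Q"
proof (clarify)
  fix h h' assume "(h, h') \<in> rsum (closure S) (eig_rel c (adj S))"
  then obtain p q where pq: "(p, q) \<in> closure S" and eig: "(h - p, scaleR c (h - p)) \<in> adj S"
    and h': "h' = q + scaleR c (h - p)"
    unfolding rsum_eig_rel_iff by blast
  obtain z where z: "\<forall>n. z n \<in> S" "z \<longlonglongrightarrow> (p, q)" using pq unfolding closure_sequential by blast
  have S: "\<forall>n. (fst (z n), snd (z n)) \<in> S" using z(1) by simp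
  have "h' - scaleR c h = q - scaleR c p" by (simp add: h' algebra_simps)
  then have "(\<lambda>n. snd (z n) - scaleR c (fst (z n))) \<longlonglongrightarrow> h' - scaleR c h"
    using tendsto_fst[OF z(2)] tendsto_snd[OF z(2)] by (auto intro!: tendsto_intros)
  moreover have "Cauchy (\<lambda>n. Q (fst (z n)))"
    using Cauchy_Q_if_convergent[OF S tendsto_fst[OF z(2)] tendsto_snd[OF z(2)]] by simp
  ultimately have "h' - scaleR c h \<in> Range (closure J)"
    using S unfolding Range_closure_companion_iff
    by (intro exI[of _ "\<lambda>n. fst (z n)"] exI[of _ "\<lambda>n. snd (z n)"]) simp
  moreover have "(h, h') \<in> adj S"
    using lin_rel_add[OF lin_rel_adj subsetD[OF closure_subset_adj pq] eig] h' by simp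
  ultimately show "(h, h') \<in> krein_K S c Q" by (simp add: krein_K_iff)
qed

lemma krein_K_eq_below_bound:
  assumes "semibounded_lb S \<gamma>" "c < \<gamma>"
  shows "krein_K S c Q = rsum (closure S) (eig_rel c (adj S))"
  using krein_K_subset_closure_sum[OF assms] closure_sum_subset_krein_K by (rule subset_antisym)

lemma krein_K_subset_krein_k_if_range_eq:
  assumes "Range (rshift c S) = closure (Range (rshift c S)) \<inter> Range (rshift c (adj S))"
  shows "krein_K S c Q \<subseteq> krein_k S c Q"
proof (clarify)
  fix h h' assume "(h, h') \<in> krein_K S c Q"
  then have adjS: "(h, h') \<in> adj S" and "h' - scaleR c h \<in> Range (closure J)"
    by (simp_all add: krein_K_iff)
  then have "h' - scaleR c h \<in> closure (Range (rshift c S))"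
    using Range_closure_subset[of J] unfolding Range_companion by blast
  moreover have "h' - scaleR c h \<in> Range (rshift c (adj S))"
    unfolding Range_rshift_iff using adjS by (intro exI[of _ h]) simp
  ultimately have "h' - scaleR c h \<in> Range (rshift c S)" using assms by blast
  then obtain \<psi> where \<psi>: "(\<psi>, h' - scaleR c h + scaleR c \<psi>) \<in> S"
    unfolding Range_rshift_iff by blast
  then have "(h - \<psi>, h' - (h' - scaleR c h + scaleR c \<psi>)) \<in> adj S"
    using lin_rel_diff[OF lin_rel_adj adjS] S_symmetric by blast
  then have "(h - \<psi>, scaleR c (h - \<psi>)) \<in> adj S" by (simp add: algebra_simps)
  moreover have "h' = (h' - scaleR c h + scaleR c \<psi>) + scaleR c (h - \<psi>)"
    by (simp add: algebra_simps)
  ultimately show "(h, h') \<in> krein_k S c Q"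
    using \<psi> unfolding krein_k_eq rsum_eig_rel_iff by blast
qed

text \<open>If the two extensions coincide, then J J* = J** J* is selfadjoint. For l on the right-hand
  side pick h with (h, l) \<in> S* - c; as l is orthogonal to ker J*, the pair (h, l) lies in
  (J J*)* = J J*, and the description of S_k,c then puts l into ran (S - c).\<close>
lemma range_eq_if_krein_k_eq_krein_K:
  assumes eq: "krein_k S c Q = krein_K S c Q"
  shows "Range (rshift c S) = closure (Range (rshift c S)) \<inter> Range (rshift c (adj S))"
proof
  show "Range (rshift c S) \<subseteq> closure (Range (rshift c S)) \<inter> Range (rshift c (adj S))"
    using closure_subset Range_rshift_subset_adj by blast
  show "closure (Range (rshift c S)) \<inter> Range (rshift c (adj S)) \<subseteq> Range (rshift c S)"
  proof
    fix l assume l: "l \<in> closure (Range (rshift c S)) \<inter> Range (rshift c (adj S))"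
    then obtain h where h: "(h, l + scaleR c h) \<in> adj S" by (auto simp: Range_rshift_iff)
    have AB: "adj J O J = adj J O adj (adj J)"
      using eq unfolding krein_k_def krein_K_def rplus_inject .
    have "cinner g' h = cinner g l" if gg': "(g, g') \<in> adj J O J" for g g'
    proof -
      obtain \<psi> \<psi>' where \<psi>: "(\<psi>, \<psi>') \<in> S" "(g, Q \<psi>) \<in> adj J" "g' = \<psi>' - scaleR c \<psi>"
        using gg' unfolding relcomp_unfold companion_iff by blast
      have "\<psi> \<in> Domain S" using \<psi>(1) by blast
      from lin_rel_diff[OF lin_rel_adj \<psi>(2) graph_Q_subset_adj_companion[OF this]]
      have "(g - \<psi>, 0) \<in> adj J" by simp
      then have "cinner l (g - \<psi>) = 0"
        using l Range_companion by (intro cinner_adj_kernel_closure_Range) auto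
      then have "cinner (g - \<psi>) l = 0" using cinner_commute[of "g - \<psi>" l] by simp
      then have "cinner g l = cinner \<psi> l" by (simp add: cinner_diff_left)
      moreover have "cinner g' h = cinner \<psi> l"
        using h \<psi>(1,3) cinner_shift_eq_iff[of \<psi>' c \<psi> h "l + scaleR c h"] by (simp add: adj_iff)
      ultimately show ?thesis by simp
    qed
    then have "(h, l) \<in> adj (adj J O adj (adj J))" unfolding AB[symmetric] by (simp add: adj_iff)
    then have "(h, l) \<in> adj J O adj (adj J)"
      using relcomp_adj_selfadjoint[OF lin_rel_adj[of J] closed_adj[of J]] by simp
    then have "(h, l + scaleR c h) \<in> krein_k S c Q"
      unfolding eq krein_K_def rplus_iff by simp
    then obtain \<psi> \<psi>' where "(\<psi>, \<psi>') \<in> S" "l + scaleR c h = \<psi>' + scaleR c (h - \<psi>)"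
      unfolding krein_k_eq rsum_eig_rel_iff by blast
    then show "l \<in> Range (rshift c S)"
      unfolding Range_rshift_iff by (intro exI[of _ \<psi>]) (simp add: algebra_simps)
  qed
qed

lemma krein_k_eq_krein_K_iff:
  "krein_k S c Q = krein_K S c Q
    \<longleftrightarrow> Range (rshift c S) = closure (Range (rshift c S)) \<inter> Range (rshift c (adj S))"
  using range_eq_if_krein_k_eq_krein_K krein_K_subset_krein_k_if_range_eq krein_k_subset_krein_K by blast

lemma krein_k_eq_krein_K_if_closed:
  "closed (Range (rshift c S)) \<Longrightarrow> krein_k S c Q = krein_K S c Q"
  using krein_k_eq_krein_K_iff Range_rshift_subset_adj by (simp add: Int_absorb2)

end

theorem theorem6p1:
  fixes S :: "('a::chilbert \<times> 'a) set" and \<gamma> :: real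
  assumes "lin_rel S" and "semibounded_lb S \<gamma>"
  shows "(\<forall>c\<le>\<gamma>. \<forall>Q :: 'a \<Rightarrow> 'b::chilbert. rep_map S c Q \<longrightarrow>
            krein_K S c Q = {(\<phi>, \<phi>'). (\<phi>, \<phi>') \<in> adj S \<and>
                 \<phi>' - scaleR c \<phi> \<in> form_closure_dom (converse (rshift c S))}
          \<and> (\<forall>H. lin_rel H \<and> H = adj H \<and> S \<subseteq> H \<and>
                 Range (rshift c H) \<subseteq> form_closure_dom (converse (rshift c S))
                 \<longrightarrow> H = krein_K S c Q)
          \<and> krein_k S c Q = rsum S (eig_rel c (adj S))
          \<and> (\<forall>H. lin_rel H \<and> H \<subseteq> adj H \<and> S \<subseteq> H \<and>
                 Range (rshift c H) \<subseteq> Range (rshift c S)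
                 \<longrightarrow> H \<subseteq> krein_k S c Q))
       \<and> (\<forall>c<\<gamma>. \<forall>Q :: 'a \<Rightarrow> 'b. rep_map S c Q \<longrightarrow>
            krein_K S c Q = rsum (closure S) (eig_rel c (adj S)))
       \<and> (\<forall>Q :: 'a \<Rightarrow> 'b. rep_map S \<gamma> Q \<longrightarrow>
            ((krein_k S \<gamma> Q = krein_K S \<gamma> Q \<longleftrightarrow>
                Range (rshift \<gamma> S) = closure (Range (rshift \<gamma> S)) \<inter> Range (rshift \<gamma> (adj S)))
             \<and> (closed (Range (rshift \<gamma> S)) \<longrightarrow> krein_k S \<gamma> Q = krein_K S \<gamma> Q)))"
proof -
  have rep: "representing_map S c Q" if "rep_map S c Q" for c and Q :: "'a \<Rightarrow> 'b"
    using assms(1) that by (rule representing_map.intro)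
  show ?thesis
    apply (intro conjI allI impI; (elim conjE)?)
    subgoal by (rule representing_map.krein_K_eq[OF rep])
    subgoal by (rule representing_map.selfadjoint_extension_eq_krein_K[OF rep])
    subgoal by (rule representing_map.krein_k_eq[OF rep])
    subgoal by (rule representing_map.symmetric_extension_subset_krein_k[OF rep])
    subgoal by (rule representing_map.krein_K_eq_below_bound[OF rep assms(2)])
    subgoal by (rule representing_map.krein_k_eq_krein_K_iff[OF rep])
    subgoal by (rule representing_map.krein_k_eq_krein_K_if_closed[OF rep])
    done
qed

end
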